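(* Let $T$ be an isometry of a compact metric space $(X,d)$ and let $\mu$ be an ergodic $T$-invariant Borel probability. Then for all $\alpha\in(1,\infty)$, $\delta>0$, $\kappa>\kappa'>0$ and $N\in\mathbb{N}$, \[\min_{\mu'}\max_{U:\,\mu'(U)\ge\kappa}\mathrm{cov}_{\kappa'}((U,d,\mu'),2\delta)\ \le\ \mathrm{BICOV}_{\alpha,\kappa,\kappa',\delta N}\big(X,d^{\mathbf{X}}_{[-N;0)},d^{\mathbf{X}}_{[0;N)},\mu\big)\ \le\ \min_{\mu'}\max_{U:\,\mu'(U)\ge\kappa}\mathrm{cov}_{\kappa'}((U,d,\mu'),\delta),\] where in both outer expressions the minimum is over Borel probabilities $\mu'$ on $X$ with $\|d\mu'/d\mu\|_\infty\le\alpha$ and the maximum over Borel $U\subseteq X$.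
   Context: $d^{\mathbf{X}}_F(x,x')=\sum_{n\in F}d(T^nx,T^nx')$. $B^d_r(x)=\{y:d(x,y)<r\}$, $B^d_r(F)=\bigcup_{x\in F}B^d_r(x)$. For $U\subseteq X$ and a measure $\mu'$, $\mathrm{cov}_a((U,d,\mu'),r)=\min\{|F|:F\subseteq U,\ \mu'(U\cap B^d_r(F))>a\}$. $\mathrm{bicov}_a((X,d_1,d_2,\mu),\delta)=\min\{|F|:F\subseteq X,\ \mu(B^{d_2}_\delta(B^{d_1}_\delta(F)))>a\}$, and for $U\subseteq X$, $(U,d_1,d_2,\mu')$ means $U$ with restricted pseudometrics (balls inside $U$) and unnormalized restriction of $\mu'$. $\mathrm{BICOV}_{\alpha,\kappa,\kappa',\delta}(X,d_1,d_2,\mu)=\min_{\mu'}\max_{U:\mu'(U)\ge\kappa}\mathrm{bicov}_{\kappa'}((U,d_1,d_2,\mu'),\delta)$, min over Borel probabilities $\mu'$ with $\|d\mu'/d\mu\|_\infty\le\alpha$, max over Borel $U$. *)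

theory Defs
  imports "HOL-Probability.Probability"
begin

definition tpow :: "('a \<Rightarrow> 'a) \<Rightarrow> int \<Rightarrow> 'a \<Rightarrow> 'a" where
  "tpow T n = (if n \<ge> 0 then T ^^ nat n else (inv T) ^^ nat (- n))"

definition dynd :: "('a::metric_space \<Rightarrow> 'a) \<Rightarrow> int set \<Rightarrow> 'a \<Rightarrow> 'a \<Rightarrow> real" where
  "dynd T F x y = (\<Sum>n\<in>F. dist (tpow T n x) (tpow T n y))"

definition rball :: "'a set \<Rightarrow> ('a \<Rightarrow> 'a \<Rightarrow> real) \<Rightarrow> real \<Rightarrow> 'a set \<Rightarrow> 'a set" where
  "rball U d r F = {y \<in> U. \<exists>x\<in>F. d x y < r}"

definition cov :: "'a measure \<Rightarrow> 'a set \<Rightarrow> ('a \<Rightarrow> 'a \<Rightarrow> real) \<Rightarrow> real \<Rightarrow> real \<Rightarrow> enat" where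
  "cov \<mu>' U d a r = Inf {enat (card F) | F. finite F \<and> F \<subseteq> U \<and> measure \<mu>' (rball U d r F) > a}"

definition bicov :: "'a measure \<Rightarrow> 'a set \<Rightarrow> ('a \<Rightarrow> 'a \<Rightarrow> real) \<Rightarrow> ('a \<Rightarrow> 'a \<Rightarrow> real)
    \<Rightarrow> real \<Rightarrow> real \<Rightarrow> enat" where
  "bicov \<mu>' U d1 d2 a \<delta> = Inf {enat (card F) | F. finite F \<and> F \<subseteq> U \<and>
      measure \<mu>' (rball U d2 \<delta> (rball U d1 \<delta> F)) > a}"

definition admissible :: "'a::topological_space measure \<Rightarrow> real \<Rightarrow> 'a measure \<Rightarrow> bool" where
  "admissible \<mu> \<alpha> \<mu>' \<longleftrightarrow> prob_space \<mu>' \<and> sets \<mu>' = sets borel \<and>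
     (\<exists>f \<in> borel_measurable \<mu>. \<mu>' = density \<mu> f \<and> (AE x in \<mu>. f x \<le> ennreal \<alpha>))"

definition COV :: "real \<Rightarrow> real \<Rightarrow> real \<Rightarrow> real \<Rightarrow> ('a::topological_space \<Rightarrow> 'a \<Rightarrow> real)
    \<Rightarrow> 'a measure \<Rightarrow> enat" where
  "COV \<alpha> \<kappa> \<kappa>' r d \<mu> = (INF \<mu>'\<in>{\<mu>'. admissible \<mu> \<alpha> \<mu>'}.
      SUP U\<in>{U \<in> sets borel. measure \<mu>' U \<ge> \<kappa>}. cov \<mu>' U d \<kappa>' r)"

definition BICOV :: "real \<Rightarrow> real \<Rightarrow> real \<Rightarrow> real \<Rightarrow> ('a::topological_space \<Rightarrow> 'a \<Rightarrow> real)
    \<Rightarrow> ('a \<Rightarrow> 'a \<Rightarrow> real) \<Rightarrow> 'a measure \<Rightarrow> enat" where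
  "BICOV \<alpha> \<kappa> \<kappa>' \<delta> d1 d2 \<mu> = (INF \<mu>'\<in>{\<mu>'. admissible \<mu> \<alpha> \<mu>'}.
      SUP U\<in>{U \<in> sets borel. measure \<mu>' U \<ge> \<kappa>}. bicov \<mu>' U d1 d2 \<kappa>' \<delta>)"

definition invariant_measure :: "'a measure \<Rightarrow> ('a \<Rightarrow> 'a) \<Rightarrow> bool" where
  "invariant_measure M T \<longleftrightarrow> T \<in> measurable M M \<and> distr M M T = M"

definition ergodic :: "'a measure \<Rightarrow> ('a \<Rightarrow> 'a) \<Rightarrow> bool" where
  "ergodic M T \<longleftrightarrow> (\<forall>A\<in>sets M. T -` A \<inter> space M = A \<longrightarrow> measure M A = 0 \<or> measure M A = 1)"

end

theory Submission
  imports Defs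
begin

text \<open>An isometry of a compact metric space is onto, since every orbit returns arbitrarily close
  to its starting point. So all integer iterates are isometries, and both dynamical pseudometrics
  over a window of length \<open>N\<close> equal \<open>N \<cdot> d\<close>. After rescaling the radius, the bi-covering
  number only involves \<open>d\<close>, and the \<open>\<delta>\<close>-neighbourhood of the \<open>\<delta>\<close>-neighbourhood of \<open>F\<close> contains
  the \<open>\<delta>\<close>-neighbourhood of \<open>F\<close> and lies in its \<open>2\<delta>\<close>-neighbourhood.\<close>

lemma funpow_isometry:
  fixes T :: "'a::metric_space \<Rightarrow> 'a"
  assumes "\<And>x y. dist (T x) (T y) = dist x y"
  shows "dist ((T ^^ n) x) ((T ^^ n) y) = dist x y"
  by (induction n) (simp_all add: assms)

lemma isometry_orbit_recurrent:
  fixes T :: "'a::metric_space \<Rightarrow> 'a"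
  assumes cpt: "compact (UNIV :: 'a set)" and iso: "\<And>x y. dist (T x) (T y) = dist x y"
    and "e > 0"
  obtains k where "dist y ((T ^^ Suc k) y) < e"
proof -
  define s where "s n = (T ^^ n) y" for n
  obtain l r where r: "strict_mono r" "(s \<circ> r) \<longlonglongrightarrow> l"
    using compact_imp_seq_compact[OF cpt] unfolding seq_compact_def by blast
  have "Cauchy (s \<circ> r)"
    using r(2) by (rule LIMSEQ_imp_Cauchy)
  then obtain M where M: "\<And>m n. m \<ge> M \<Longrightarrow> n \<ge> M \<Longrightarrow> dist ((s \<circ> r) m) ((s \<circ> r) n) < e"
    using \<open>e > 0\<close> unfolding Cauchy_def by meson
  have "r M < r (Suc M)"
    using r(1) by (rule strict_monoD) simp
  then obtain k where k: "r (Suc M) = Suc (r M + k)"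
    using less_imp_Suc_add by blast
  have "s (r (Suc M)) = (T ^^ r M) ((T ^^ Suc k) y)"
    by (simp only: s_def k add_Suc_right[symmetric] funpow_add comp_def)
  then have "dist y ((T ^^ Suc k) y) = dist (s (r M)) (s (r (Suc M)))"
    by (simp add: s_def funpow_isometry[OF iso])
  also have "\<dots> < e"
    using M[of M "Suc M"] by simp
  finally show thesis
    by (rule that)
qed

lemma isometry_compact_surj:
  fixes T :: "'a::metric_space \<Rightarrow> 'a"
  assumes cpt: "compact (UNIV :: 'a set)" and iso: "\<And>x y. dist (T x) (T y) = dist x y"
  shows "surj T"
proof (rule ccontr)
  assume "\<not> surj T"
  then obtain y where y: "y \<notin> range T"
    by auto
  have "continuous_on UNIV T"
    unfolding continuous_on_iff by (metis iso)
  then have "open (- range T)"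
    using compact_continuous_image[OF _ cpt] compact_imp_closed by blast
  then obtain e where "e > 0" and e: "\<And>x. dist x y < e \<Longrightarrow> x \<notin> range T"
    using y unfolding open_dist by blast
  obtain k where "dist y ((T ^^ Suc k) y) < e"
    using isometry_orbit_recurrent[OF cpt iso \<open>e > 0\<close>] .
  then show False
    using e[of "T ((T ^^ k) y)"] by (simp add: dist_commute)
qed

lemma tpow_isometry:
  fixes T :: "'a::metric_space \<Rightarrow> 'a"
  assumes iso: "\<And>x y. dist (T x) (T y) = dist x y" and "surj T"
  shows "dist (tpow T n x) (tpow T n y) = dist x y"
proof -
  have "dist (inv T a) (inv T b) = dist a b" for a b
    using iso[of "inv T a" "inv T b"] by (simp add: surj_f_inv_f[OF \<open>surj T\<close>])
  then show ?thesis
    unfolding tpow_def using funpow_isometry[OF iso] funpow_isometry[of "inv T"] by simp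
qed

lemma dynd_isometry:
  fixes T :: "'a::metric_space \<Rightarrow> 'a"
  assumes "\<And>x y. dist (T x) (T y) = dist x y" and "surj T"
  shows "dynd T {l..<u} = (\<lambda>x y. real (nat (u - l)) * dist x y)"
  by (intro ext) (simp add: dynd_def tpow_isometry[OF assms])

lemma rball_scaled_dist:
  fixes U :: "'a::metric_space set"
  assumes "c > 0"
  shows "rball U (\<lambda>x y. c * dist x y) (r * c) F = rball U dist r F"
  using assms by (simp add: rball_def mult.commute)

lemma rball_dist_eq: "rball U dist r F = U \<inter> (\<Union>x\<in>F. ball x r)"
  by (auto simp: rball_def)

lemma rball_dist_borel:
  fixes U :: "'a::metric_space set"
  assumes "U \<in> sets borel"
  shows "rball U dist r F \<in> sets borel"
  unfolding rball_dist_eq by (intro sets.Int assms borel_open open_UN) auto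

lemma rball_dist_subset_rball_rball:
  fixes U :: "'a::metric_space set"
  assumes "F \<subseteq> U" and "r > 0"
  shows "rball U dist r F \<subseteq> rball U dist r (rball U dist r F)"
  using assms by (fastforce simp: rball_def)

lemma rball_rball_dist_subset:
  fixes U :: "'a::metric_space set"
  shows "rball U dist r (rball U dist s F) \<subseteq> rball U dist (s + r) F"
proof
  fix y
  assume "y \<in> rball U dist r (rball U dist s F)"
  then obtain z x where "y \<in> U" "x \<in> F" "dist x z < s" "dist z y < r"
    by (auto simp: rball_def)
  moreover from this have "dist x y < s + r"
    using dist_triangle[of x y z] by linarith
  ultimately show "y \<in> rball U dist (s + r) F"
    by (auto simp: rball_def)
qed

lemma Inf_card_mono:
  assumes "\<And>F. finite F \<Longrightarrow> F \<subseteq> U \<Longrightarrow> P F \<Longrightarrow> Q F"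
  shows "Inf {enat (card F) | F. finite F \<and> F \<subseteq> U \<and> Q F}
       \<le> Inf {enat (card F) | F. finite F \<and> F \<subseteq> U \<and> P F}"
  by (rule Inf_superset_mono) (use assms in blast)

lemma bicov_scaled_dist:
  fixes U :: "'a::metric_space set"
  assumes "c > 0"
  shows "bicov \<mu>' U (\<lambda>x y. c * dist x y) (\<lambda>x y. c * dist x y) a (r * c) = bicov \<mu>' U dist dist a r"
  by (simp add: bicov_def rball_scaled_dist[OF assms])

lemma cov_double_le_bicov:
  fixes U :: "'a::metric_space set"
  assumes "finite_measure \<mu>'" and "sets \<mu>' = sets borel" and "U \<in> sets borel"
  shows "cov \<mu>' U dist a (2 * r) \<le> bicov \<mu>' U dist dist a r"
  unfolding cov_def bicov_def
proof (rule Inf_card_mono)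
  fix F
  assume "a < measure \<mu>' (rball U dist r (rball U dist r F))"
  also have "\<dots> \<le> measure \<mu>' (rball U dist (r + r) F)"
    by (intro finite_measure.finite_measure_mono[OF assms(1)] rball_rball_dist_subset)
      (simp add: assms(2) rball_dist_borel[OF assms(3)])
  finally show "a < measure \<mu>' (rball U dist (2 * r) F)"
    unfolding mult_2 .
qed

lemma bicov_le_cov:
  fixes U :: "'a::metric_space set"
  assumes "finite_measure \<mu>'" and "sets \<mu>' = sets borel" and "U \<in> sets borel" and "r > 0"
  shows "bicov \<mu>' U dist dist a r \<le> cov \<mu>' U dist a r"
  unfolding cov_def bicov_def
proof (rule Inf_card_mono)
  fix F
  assume "F \<subseteq> U"
  assume "a < measure \<mu>' (rball U dist r F)"
  also have "\<dots> \<le> measure \<mu>' (rball U dist r (rball U dist r F))"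
    by (intro finite_measure.finite_measure_mono[OF assms(1)] rball_dist_subset_rball_rball
        \<open>F \<subseteq> U\<close> \<open>r > 0\<close>)
      (simp add: assms(2) rball_dist_borel[OF assms(3)])
  finally show "a < measure \<mu>' (rball U dist r (rball U dist r F))" .
qed

lemma admissible_finite_measure: "admissible \<mu> \<alpha> \<mu>' \<Longrightarrow> finite_measure \<mu>'"
  unfolding admissible_def by (blast intro: prob_space.finite_measure)

lemma admissible_sets: "admissible \<mu> \<alpha> \<mu>' \<Longrightarrow> sets \<mu>' = sets borel"
  unfolding admissible_def by blast

lemma COV_double_le_BICOV_dist:
  fixes \<mu> :: "'a::metric_space measure"
  shows "COV \<alpha> \<kappa> \<kappa>' (2 * r) dist \<mu> \<le> BICOV \<alpha> \<kappa> \<kappa>' r dist dist \<mu>"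
  unfolding COV_def BICOV_def
  by (intro INF_superset_mono[OF order_refl] SUP_subset_mono[OF order_refl] cov_double_le_bicov
      admissible_finite_measure[of \<mu> \<alpha>] admissible_sets[of \<mu> \<alpha>]) auto

lemma BICOV_dist_le_COV:
  fixes \<mu> :: "'a::metric_space measure"
  assumes "r > 0"
  shows "BICOV \<alpha> \<kappa> \<kappa>' r dist dist \<mu> \<le> COV \<alpha> \<kappa> \<kappa>' r dist \<mu>"
  unfolding COV_def BICOV_def
  by (intro INF_superset_mono[OF order_refl] SUP_subset_mono[OF order_refl] bicov_le_cov assms
      admissible_finite_measure[of \<mu> \<alpha>] admissible_sets[of \<mu> \<alpha>]) auto

theorem mainTheorem7:
  fixes T :: "'a::metric_space \<Rightarrow> 'a" and \<mu> :: "'a measure"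
    and \<alpha> \<delta> \<kappa> \<kappa>' :: real and N :: nat
  assumes "compact (UNIV :: 'a set)"
    and "\<And>x y. dist (T x) (T y) = dist x y"
    and "prob_space \<mu>" and "sets \<mu> = sets borel"
    and "invariant_measure \<mu> T"
    and "ergodic \<mu> T"
    and "\<alpha> > 1" and "\<delta> > 0" and "\<kappa> > \<kappa>'" and "\<kappa>' > 0" and "N \<ge> 1"
  shows "COV \<alpha> \<kappa> \<kappa>' (2 * \<delta>) dist \<mu>
           \<le> BICOV \<alpha> \<kappa> \<kappa>' (\<delta> * real N) (dynd T {- int N..<0}) (dynd T {0..<int N}) \<mu>
       \<and> BICOV \<alpha> \<kappa> \<kappa>' (\<delta> * real N) (dynd T {- int N..<0}) (dynd T {0..<int N}) \<mu>
           \<le> COV \<alpha> \<kappa> \<kappa>' \<delta> dist \<mu>"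
proof -
  have "surj T"
    using isometry_compact_surj assms(1,2) by blast
  then have "dynd T {- int N..<0} = (\<lambda>x y. real N * dist x y)"
    and "dynd T {0..<int N} = (\<lambda>x y. real N * dist x y)"
    using dynd_isometry[OF assms(2)] by simp_all
  moreover have "real N > 0"
    using \<open>N \<ge> 1\<close> by simp
  ultimately have "BICOV \<alpha> \<kappa> \<kappa>' (\<delta> * real N) (dynd T {- int N..<0}) (dynd T {0..<int N}) \<mu>
      = BICOV \<alpha> \<kappa> \<kappa>' \<delta> dist dist \<mu>"
    by (simp add: BICOV_def bicov_scaled_dist)
  then show ?thesis
    using COV_double_le_BICOV_dist[of \<alpha> \<kappa> \<kappa>' \<delta> \<mu>]
      BICOV_dist_le_COV[OF \<open>\<delta> > 0\<close>, of \<alpha> \<kappa> \<kappa>' \<mu>] by simp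
qed

end
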